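(* For every $A\in\mathrm{Sym}(\mathbb R^{n+1})$, $$\big|\widetilde\Theta(A)-\mathrm{tr}\tan^{-1}(A^+)\big|\le\pi/2,\qquad \big|\underline{\widetilde\Theta}(A)-\mathrm{tr}\tan^{-1}(A^+)\big|\le\pi/2.$$
   Context: For $A=[a_{ij}]_{i,j=0}^n\in\mathrm{Sym}(\mathbb R^{n+1})$ write $A^+=[a_{ij}]_{i,j=1}^n$; $I_n=\mathrm{diag}(0,1,\dots,1)$; $\mathcal S=\{A: A=\mathrm{diag}(0,A^+)\}$. $\arg$ has values in $(-\pi,\pi]$, $\tan^{-1}$ in $(-\pi/2,\pi/2)$, applied to symmetric matrices via eigenvalues. For $A\notin\mathcal S$, $\widehat\Theta(A)=\sum_{\lambda\in\mathrm{spec}(I_n+\sqrt{-1}A)}m(\lambda)\arg\lambda$ ($m$ = algebraic multiplicity). $\widetilde\Theta=\underline{\widetilde\Theta}=\widehat\Theta$ off $\mathcal S$; on $\mathcal S$, $\widetilde\Theta(A)=\pi/2+\mathrm{tr}\tan^{-1}(A^+)$ and $\underline{\widetilde\Theta}(A)=-\pi/2+\mathrm{tr}\tan^{-1}(A^+)$. *)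

theory Defs
  imports "HOL-Analysis.Analysis" "Jordan_Normal_Form.Char_Poly"
begin

definition sym_mat :: "nat \<Rightarrow> real mat \<Rightarrow> bool" where
  "sym_mat n A \<longleftrightarrow> A \<in> carrier_mat (Suc n) (Suc n) \<and> transpose_mat A = A"

(* A^+ = [a_ij]_{i,j=1}^n *)
definition plus_part :: "nat \<Rightarrow> real mat \<Rightarrow> real mat" where
  "plus_part n A = mat n n (\<lambda>(i,j). A $$ (Suc i, Suc j))"

(* I_n + sqrt(-1) A, with I_n = diag(0,1,...,1) *)
definition In_iA :: "nat \<Rightarrow> real mat \<Rightarrow> complex mat" where
  "In_iA n A = mat (Suc n) (Suc n)
     (\<lambda>(i,j). (if i = j \<and> i \<noteq> 0 then 1 else 0) + \<i> * complex_of_real (A $$ (i,j)))"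

(* the set S: A = diag(0, A^+) *)
definition in_S :: "nat \<Rightarrow> real mat \<Rightarrow> bool" where
  "in_S n A \<longleftrightarrow> (\<forall>j\<le>n. A $$ (0,j) = 0 \<and> A $$ (j,0) = 0)"

definition Theta_hat :: "nat \<Rightarrow> real mat \<Rightarrow> real" where
  "Theta_hat n A = (\<Sum>z\<in>{z. eigenvalue (In_iA n A) z}.
      real (order z (char_poly (In_iA n A))) * Arg z)"

definition tr_arctan :: "real mat \<Rightarrow> real" where
  "tr_arctan B = (\<Sum>m\<in>{m. eigenvalue B m}. real (order m (char_poly B)) * arctan m)"

definition Theta_tilde :: "nat \<Rightarrow> real mat \<Rightarrow> real" where
  "Theta_tilde n A = (if in_S n A then pi/2 + tr_arctan (plus_part n A) else Theta_hat n A)"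

definition Theta_tilde_low :: "nat \<Rightarrow> real mat \<Rightarrow> real" where
  "Theta_tilde_low n A = (if in_S n A then - pi/2 + tr_arctan (plus_part n A) else Theta_hat n A)"

end

theory Submission
  imports Defs
begin

text \<open>Put \<open>M = I\<^sub>n + iA\<close>, \<open>C = A\<^sup>+\<close> and deform along \<open>N\<^sub>t = (1 - t)I + tM\<close>, \<open>0 \<le> t \<le> 1\<close>.
  Each \<open>N\<^sub>t\<close> is a nonnegative diagonal matrix plus \<open>i\<close> times a real symmetric one, so
  \<open>Re (v\<^sup>* N\<^sub>t v) \<ge> 0\<close>. Hence the eigenvalues of \<open>M\<close> lie in the closed right half plane
  (and are nonzero off \<open>S\<close>); and testing with the first column of the adjugate of \<open>N\<^sub>t\<close>,
  whose \<open>(0,0)\<close> cofactor is \<open>det (I + itC)\<close>, gives \<open>Re (det N\<^sub>t \<cdot> cnj (det (I + itC))) \<ge> 0\<close>.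
  So \<open>det N\<^sub>t / det (I + itC)\<close> never meets the closed negative real axis, and continuing the
  logarithms of its eigenvalue factors from \<open>t = 0\<close> identifies
  \<open>Theta_hat n A - tr_arctan (plus_part n A)\<close> with the principal argument of
  \<open>det M / det (I + iC)\<close>, a number with nonnegative real part.\<close>

text \<open>Analysis's \<open>vec_nth\<close> notation would shadow vector indexing of \<open>Jordan_Normal_Form\<close>.\<close>

no_notation vec_nth (infixl "$" 90)

section \<open>Quadratic forms of \<open>diag d + iB\<close> with \<open>B\<close> real symmetric\<close>

definition quad_form :: "complex mat \<Rightarrow> complex vec \<Rightarrow> complex" where
  "quad_form S v = (\<Sum>i<dim_vec v. cnj (v $ i) * (S *\<^sub>v v) $ i)"

definition sym_entries :: "nat \<Rightarrow> 'a mat \<Rightarrow> bool" where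
  "sym_entries m B \<longleftrightarrow> (\<forall>i<m. \<forall>j<m. B $$ (i, j) = B $$ (j, i))"

definition diag_plus_imag :: "nat \<Rightarrow> (nat \<Rightarrow> real) \<Rightarrow> real mat \<Rightarrow> complex mat" where
  "diag_plus_imag m d B = mat m m (\<lambda>(i, j).
     (if i = j then complex_of_real (d i) else 0) + \<i> * complex_of_real (B $$ (i, j)))"

lemma diag_plus_imag_carrier [simp]: "diag_plus_imag m d B \<in> carrier_mat m m"
  by (simp add: diag_plus_imag_def)

lemma dim_diag_plus_imag [simp]:
  "dim_row (diag_plus_imag m d B) = m" "dim_col (diag_plus_imag m d B) = m"
  by (simp_all add: diag_plus_imag_def)

lemma index_diag_plus_imag [simp]:
  "i < m \<Longrightarrow> j < m \<Longrightarrow> diag_plus_imag m d B $$ (i, j) =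
     (if i = j then complex_of_real (d i) else 0) + \<i> * complex_of_real (B $$ (i, j))"
  by (simp add: diag_plus_imag_def)

lemma mult_mat_vec_index_sum:
  assumes "S \<in> carrier_mat m m" "v \<in> carrier_vec m" "i < m"
  shows "(S *\<^sub>v v) $ i = (\<Sum>j<m. S $$ (i, j) * v $ j)"
  using assms by (auto simp: scalar_prod_def lessThan_atLeast0 intro!: sum.cong)

lemma Im_real_sym_form_eq_0:
  fixes B :: "real mat"
  assumes sym: "sym_entries m B"
  shows "Im (\<Sum>i<m. \<Sum>j<m. cnj (v $ i) * complex_of_real (B $$ (i, j)) * v $ j) = 0"
proof -
  let ?X = "\<Sum>i<m. \<Sum>j<m. cnj (v $ i) * complex_of_real (B $$ (i, j)) * v $ j"
  have "cnj ?X = (\<Sum>i<m. \<Sum>j<m. v $ i * complex_of_real (B $$ (i, j)) * cnj (v $ j))"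
    by (simp add: cnj_sum)
  also have "\<dots> = (\<Sum>j<m. \<Sum>i<m. v $ i * complex_of_real (B $$ (i, j)) * cnj (v $ j))"
    by (rule sum.swap)
  also have "\<dots> = ?X"
    using sym by (intro sum.cong refl) (simp add: sym_entries_def mult.commute mult.left_commute)
  finally show ?thesis
    by (simp only: Reals_cnj_iff[symmetric] complex_is_Real_iff)
qed

lemma Re_quad_form_diag_plus_imag:
  fixes B :: "real mat"
  assumes sym: "sym_entries m B"
    and v: "v \<in> carrier_vec m"
  shows "Re (quad_form (diag_plus_imag m d B) v) = (\<Sum>i<m. d i * (cmod (v $ i))\<^sup>2)"
proof -
  let ?X = "\<Sum>i<m. \<Sum>j<m. cnj (v $ i) * complex_of_real (B $$ (i, j)) * v $ j"
  have row: "cnj (v $ i) * (diag_plus_imag m d B *\<^sub>v v) $ i =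
      complex_of_real (d i) * (cnj (v $ i) * v $ i)
      + \<i> * (\<Sum>j<m. cnj (v $ i) * complex_of_real (B $$ (i, j)) * v $ j)" if i: "i < m" for i
  proof -
    have "(diag_plus_imag m d B *\<^sub>v v) $ i = (\<Sum>j<m.
        (if i = j then complex_of_real (d i) * v $ j else 0)
        + \<i> * (complex_of_real (B $$ (i, j)) * v $ j))"
      using i v by (subst mult_mat_vec_index_sum[of _ m]) (auto simp: algebra_simps intro!: sum.cong)
    also have "\<dots> = complex_of_real (d i) * v $ i
        + \<i> * (\<Sum>j<m. complex_of_real (B $$ (i, j)) * v $ j)"
      using i by (simp add: sum.distrib sum_distrib_left)
    finally show ?thesis
      by (simp add: algebra_simps sum_distrib_left)
  qed
  have "quad_form (diag_plus_imag m d B) v =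
      (\<Sum>i<m. cnj (v $ i) * (diag_plus_imag m d B *\<^sub>v v) $ i)"
    using v by (simp add: quad_form_def)
  also have "\<dots> = (\<Sum>i<m. complex_of_real (d i) * (cnj (v $ i) * v $ i)) + \<i> * ?X"
    by (subst sum.cong[OF refl row]) (simp_all add: sum.distrib sum_distrib_left)
  finally have "quad_form (diag_plus_imag m d B) v =
      (\<Sum>i<m. complex_of_real (d i) * (cnj (v $ i) * v $ i)) + \<i> * ?X" .
  moreover have "Im ?X = 0"
    by (rule Im_real_sym_form_eq_0[OF sym])
  moreover have "Re (complex_of_real (d i) * (cnj (v $ i) * v $ i)) = d i * (cmod (v $ i))\<^sup>2" for i
    unfolding cmod_power2 by (simp add: power2_eq_square algebra_simps)
  ultimately show ?thesis
    by (simp only: Re_sum plus_complex.sel) simp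
qed

lemma quad_form_eigenvector:
  assumes "S *\<^sub>v v = z \<cdot>\<^sub>v v"
  shows "quad_form S v = z * complex_of_real (\<Sum>i<dim_vec v. (cmod (v $ i))\<^sup>2)"
proof -
  have "quad_form S v = (\<Sum>i<dim_vec v. z * (cnj (v $ i) * v $ i))"
    unfolding quad_form_def assms by (intro sum.cong refl) (simp add: algebra_simps)
  then show ?thesis
    by (simp only: of_real_sum sum_distrib_left complex_norm_square mult_ac)
qed

lemma sum_cmod_sq_pos:
  assumes v: "v \<in> carrier_vec m" and nz: "v \<noteq> 0\<^sub>v m"
  shows "0 < (\<Sum>i<m. (cmod (v $ i))\<^sup>2)"
proof -
  obtain i where i: "i < m" "v $ i \<noteq> 0"
    using v nz by (metis eq_vecI carrier_vecD index_zero_vec(1,2))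
  then have "0 < (cmod (v $ i))\<^sup>2" by simp
  also have "\<dots> \<le> (\<Sum>i<m. (cmod (v $ i))\<^sup>2)"
    using i by (intro member_le_sum) auto
  finally show ?thesis .
qed

lemma eigenvector_diag_plus_imag_Re:
  fixes B :: "real mat"
  assumes sym: "sym_entries m B"
    and ev: "eigenvector (diag_plus_imag m d B) v z"
  shows "Re z * (\<Sum>i<m. (cmod (v $ i))\<^sup>2) = (\<Sum>i<m. d i * (cmod (v $ i))\<^sup>2)"
proof -
  have v: "v \<in> carrier_vec m" and eq: "diag_plus_imag m d B *\<^sub>v v = z \<cdot>\<^sub>v v"
    using ev by (auto simp: eigenvector_def)
  have "Re (quad_form (diag_plus_imag m d B) v) = Re z * (\<Sum>i<m. (cmod (v $ i))\<^sup>2)"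
    unfolding quad_form_eigenvector[OF eq] using v by (simp del: of_real_sum of_real_power)
  then show ?thesis
    using Re_quad_form_diag_plus_imag[OF sym v] by simp
qed

lemma eigenvalue_diag_plus_imag_Re_nonneg:
  fixes B :: "real mat"
  assumes sym: "sym_entries m B"
    and d: "\<And>i. i < m \<Longrightarrow> 0 \<le> d i"
    and "eigenvalue (diag_plus_imag m d B) z"
  shows "0 \<le> Re z"
proof -
  obtain v where ev: "eigenvector (diag_plus_imag m d B) v z"
    using assms(3) by (auto simp: eigenvalue_def)
  then have "0 < (\<Sum>i<m. (cmod (v $ i))\<^sup>2)"
    by (intro sum_cmod_sq_pos) (auto simp: eigenvector_def)
  moreover have "0 \<le> (\<Sum>i<m. d i * (cmod (v $ i))\<^sup>2)"
    using d by (intro sum_nonneg) simp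
  ultimately show ?thesis
    using eigenvector_diag_plus_imag_Re[OF sym ev] by (metis zero_le_mult_iff not_le)
qed

lemma eigenvector_diag_plus_imag_vanishes:
  fixes B :: "real mat"
  assumes sym: "sym_entries m B"
    and d: "\<And>i. i < m \<Longrightarrow> 0 \<le> d i"
    and ev: "eigenvector (diag_plus_imag m d B) v z" and "Re z = 0"
    and i: "i < m" "0 < d i"
  shows "v $ i = 0"
proof -
  have "(\<Sum>j<m. d j * (cmod (v $ j))\<^sup>2) = 0"
    using eigenvector_diag_plus_imag_Re[OF sym ev] \<open>Re z = 0\<close> by simp
  then have "d i * (cmod (v $ i))\<^sup>2 = 0"
    using d i(1) by (subst (asm) sum_nonneg_eq_0_iff) auto
  then show ?thesis
    using i(2) by simp
qed

lemma eigenvalue_real_sym_mat_Im_eq_0: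
  fixes C :: "real mat"
  assumes C: "C \<in> carrier_mat m m"
    and sym: "sym_entries m C"
    and "eigenvalue (map_mat complex_of_real C) z"
  shows "Im z = 0"
proof -
  obtain v where ev: "eigenvector (map_mat complex_of_real C) v z"
    using assms(3) by (auto simp: eigenvalue_def)
  then have v: "v \<in> carrier_vec m" "v \<noteq> 0\<^sub>v m"
    using C by (auto simp: eigenvector_def)
  have "diag_plus_imag m (\<lambda>_. 0) C *\<^sub>v v = \<i> \<cdot>\<^sub>v (map_mat complex_of_real C *\<^sub>v v)"
    using C v by (intro eq_vecI) (auto simp: scalar_prod_def sum_distrib_left mult.assoc intro!: sum.cong)
  also have "\<dots> = (\<i> * z) \<cdot>\<^sub>v v"
    using ev by (auto simp: eigenvector_def smult_smult_assoc)
  finally have "eigenvector (diag_plus_imag m (\<lambda>_. 0) C) v (\<i> * z)"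
    using v by (simp add: eigenvector_def)
  then have "Im z * (\<Sum>i<m. (cmod (v $ i))\<^sup>2) = 0"
    using eigenvector_diag_plus_imag_Re[OF sym] by fastforce
  then show ?thesis
    using sum_cmod_sq_pos[OF v] by simp
qed

lemma Re_det_mult_cnj_det_minor_nonneg:
  fixes B :: "real mat"
  assumes sym: "sym_entries (Suc n) B"
    and d: "\<And>i. i < Suc n \<Longrightarrow> 0 \<le> d i"
  defines "N \<equiv> diag_plus_imag (Suc n) d B"
  shows "0 \<le> Re (det N * cnj (det (mat_delete N 0 0)))"
proof -
  have N: "N \<in> carrier_mat (Suc n) (Suc n)"
    by (simp add: N_def)
  define a where "a = col (adj_mat N) 0"
  have a: "a \<in> carrier_vec (Suc n)"
    unfolding a_def by (rule col_carrier_vec[OF _ adj_mat(1)[OF N]]) simp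
  have "N *\<^sub>v a = col (det N \<cdot>\<^sub>m 1\<^sub>m (Suc n)) 0"
    using col_mult2[OF N adj_mat(1)[OF N], of 0] adj_mat(2)[OF N] by (simp add: a_def)
  then have Na: "(N *\<^sub>v a) $ i = (if i = 0 then det N else 0)" if "i < Suc n" for i
    using that by simp
  have "quad_form N a = (\<Sum>i<Suc n. cnj (a $ i) * (if i = 0 then det N else 0))"
    using a unfolding quad_form_def by (intro sum.cong) (auto simp: Na)
  also have "\<dots> = cnj (a $ 0) * det N"
    by (subst sum.lessThan_Suc_shift) simp
  also have "a $ 0 = det (mat_delete N 0 0)"
    using N by (simp add: a_def adj_mat_def cofactor_def)
  finally have "quad_form N a = det N * cnj (det (mat_delete N 0 0))"
    by (simp add: mult.commute)
  moreover have "Re (quad_form N a) = (\<Sum>i<Suc n. d i * (cmod (a $ i))\<^sup>2)"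
    unfolding N_def by (rule Re_quad_form_diag_plus_imag[OF sym a])
  moreover have "0 \<le> (\<Sum>i<Suc n. d i * (cmod (a $ i))\<^sup>2)"
    using d by (intro sum_nonneg) simp
  ultimately show ?thesis by simp
qed

section \<open>Determinants through eigenvalues\<close>

lemma finite_eigenvalues:
  fixes X :: "'a :: field mat"
  assumes "X \<in> carrier_mat N N"
  shows "finite {z. eigenvalue X z}"
proof -
  have "char_poly X \<noteq> 0"
    using degree_monic_char_poly[OF assms] by auto
  then show ?thesis
    using poly_roots_finite eigenvalue_root_char_poly[OF assms] by simp
qed

lemma char_poly_factorization:
  fixes X :: "complex mat"
  assumes "X \<in> carrier_mat N N"
  shows "char_poly X = (\<Prod>z\<in>{z. eigenvalue X z}. [:-z, 1:] ^ order z (char_poly X))"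
proof -
  have "lead_coeff (char_poly X) = 1"
    using degree_monic_char_poly[OF assms] by simp
  then show ?thesis
    using complex_poly_decompose[of "char_poly X"] eigenvalue_root_char_poly[OF assms] by simp
qed

lemma sum_order_eigenvalues:
  fixes X :: "complex mat"
  assumes X: "X \<in> carrier_mat N N"
  shows "(\<Sum>z\<in>{z. eigenvalue X z}. order z (char_poly X)) = N"
proof -
  have "N = degree (\<Prod>z\<in>{z. eigenvalue X z}. [:-z, 1:] ^ order z (char_poly X))"
    using degree_monic_char_poly[OF X] char_poly_factorization[OF X] by simp
  also have "\<dots> = (\<Sum>z\<in>{z. eigenvalue X z}. order z (char_poly X))"
    by (subst degree_prod_eq_sum_degree) (auto simp: degree_linear_power)
  finally show ?thesis by simp
qed

lemma det_add_smult_eq_prod_eigenvalues: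
  fixes X :: "complex mat"
  assumes X: "X \<in> carrier_mat N N"
  shows "det (a \<cdot>\<^sub>m 1\<^sub>m N + b \<cdot>\<^sub>m X) =
    (\<Prod>z\<in>{z. eigenvalue X z}. (a + b * z) ^ order z (char_poly X))"
proof (cases "b = 0")
  case True
  have "a \<cdot>\<^sub>m 1\<^sub>m N + b \<cdot>\<^sub>m X = a \<cdot>\<^sub>m 1\<^sub>m N"
    using X True by (intro eq_matI) auto
  then have "det (a \<cdot>\<^sub>m 1\<^sub>m N + b \<cdot>\<^sub>m X) = a ^ N"
    by simp
  also have "\<dots> = (\<Prod>z\<in>{z. eigenvalue X z}. a ^ order z (char_poly X))"
    by (subst (1) sum_order_eigenvalues[OF X, symmetric]) (rule power_sum)
  finally show ?thesis
    using True by simp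
next
  case False
  define x where "x = - a / b"
  have "a \<cdot>\<^sub>m 1\<^sub>m N + b \<cdot>\<^sub>m X = (- b) \<cdot>\<^sub>m (- char_matrix X x)"
    using X False by (intro eq_matI) (auto simp: char_matrix_def x_def field_simps)
  then have "det (a \<cdot>\<^sub>m 1\<^sub>m N + b \<cdot>\<^sub>m X) = (- b) ^ N * poly (char_poly X) x"
    using X by (simp add: char_poly_matrix[OF X] char_matrix_def)
  also have "poly (char_poly X) x = (\<Prod>z\<in>{z. eigenvalue X z}. (x - z) ^ order z (char_poly X))"
    by (subst char_poly_factorization[OF X]) (simp add: poly_prod)
  also have "(- b) ^ N = (\<Prod>z\<in>{z. eigenvalue X z}. (- b) ^ order z (char_poly X))"
    by (subst (1) sum_order_eigenvalues[OF X, symmetric]) (rule power_sum)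
  also have "(\<Prod>z\<in>{z. eigenvalue X z}. (- b) ^ order z (char_poly X)) *
      (\<Prod>z\<in>{z. eigenvalue X z}. (x - z) ^ order z (char_poly X)) =
      (\<Prod>z\<in>{z. eigenvalue X z}. ((- b) * (x - z)) ^ order z (char_poly X))"
    by (simp only: prod.distrib[symmetric] power_mult_distrib[symmetric])
  also have "\<dots> = (\<Prod>z\<in>{z. eigenvalue X z}. (a + b * z) ^ order z (char_poly X))"
    using False by (intro prod.cong refl) (simp add: x_def algebra_simps)
  finally show ?thesis .
qed

interpretation of_real_poly: map_poly_inj_idom_divide_hom "of_real :: real \<Rightarrow> complex" ..

lemma eigenvalues_map_mat_of_real:
  fixes C :: "real mat"
  assumes C: "C \<in> carrier_mat m m"
    and sym: "sym_entries m C"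
  shows "{z. eigenvalue (map_mat complex_of_real C) z} = complex_of_real ` {x. eigenvalue C x}"
proof (intro equalityI subsetI)
  fix z
  assume "z \<in> {z. eigenvalue (map_mat complex_of_real C) z}"
  then have ev: "eigenvalue (map_mat complex_of_real C) z" by simp
  have z: "z = complex_of_real (Re z)"
    using eigenvalue_real_sym_mat_Im_eq_0[OF C sym ev] by (simp add: complex_eq_iff)
  have "poly (char_poly (map_mat complex_of_real C)) z = 0"
    using ev C by (simp add: eigenvalue_root_char_poly[of _ m])
  then have "poly (char_poly C) (Re z) = 0"
    unfolding of_real_hom.char_poly_hom[OF C]
    by (subst (asm) z) (simp only: of_real_hom.poly_map_poly of_real_eq_0_iff)
  then show "z \<in> complex_of_real ` {x. eigenvalue C x}"
    using z eigenvalue_root_char_poly[OF C] by blast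
next
  fix z
  assume "z \<in> complex_of_real ` {x. eigenvalue C x}"
  then show "z \<in> {z. eigenvalue (map_mat complex_of_real C) z}"
    using of_real_hom.eigenvalue_hom[OF C] by auto
qed

lemma det_add_smult_real_sym_eq_prod_eigenvalues:
  fixes C :: "real mat"
  assumes C: "C \<in> carrier_mat m m"
    and sym: "sym_entries m C"
  shows "det (a \<cdot>\<^sub>m 1\<^sub>m m + b \<cdot>\<^sub>m map_mat complex_of_real C) =
    (\<Prod>x\<in>{x. eigenvalue C x}. (a + b * complex_of_real x) ^ order x (char_poly C))"
proof -
  have "det (a \<cdot>\<^sub>m 1\<^sub>m m + b \<cdot>\<^sub>m map_mat complex_of_real C) =
      (\<Prod>z\<in>complex_of_real ` {x. eigenvalue C x}.
         (a + b * z) ^ order z (char_poly (map_mat complex_of_real C)))"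
    using C by (subst det_add_smult_eq_prod_eigenvalues[of _ m])
      (simp_all add: eigenvalues_map_mat_of_real[OF C sym])
  also have "\<dots> = (\<Prod>x\<in>{x. eigenvalue C x}. (a + b * complex_of_real x) ^ order x (char_poly C))"
    by (subst prod.reindex)
      (auto simp: inj_on_def of_real_hom.char_poly_hom[OF C] of_real_poly.order_hom)
  finally show ?thesis .
qed

section \<open>Continuation of logarithms\<close>

lemma exp_eq_1_imp_constant_on:
  fixes G :: "'a::topological_space \<Rightarrow> complex"
  assumes S: "connected S" and G: "continuous_on S G" and exp: "\<And>t. t \<in> S \<Longrightarrow> exp (G t) = 1"
  shows "G constant_on S"
proof (rule continuous_discrete_range_constant[OF S G])
  fix x
  assume x: "x \<in> S"
  show "\<exists>e>0. \<forall>y. y \<in> S \<and> G y \<noteq> G x \<longrightarrow> e \<le> norm (G y - G x)"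
  proof (intro exI[of _ "2 * pi"] conjI allI impI)
    fix y
    assume y: "y \<in> S \<and> G y \<noteq> G x"
    have "exp (G y - G x) = 1"
      using exp x y by (simp add: exp_diff)
    then obtain k :: int where k: "Re (G y - G x) = 0" "Im (G y - G x) = of_int (2 * k) * pi"
      by (auto simp: exp_eq_1)
    then have "k \<noteq> 0"
      using y by (auto simp: complex_eq_iff)
    then have "2 * pi \<le> \<bar>Im (G y - G x)\<bar>"
      unfolding k(2) by (simp add: abs_mult)
    also have "\<dots> \<le> norm (G y - G x)"
      by (rule abs_Im_le_cmod)
    finally show "2 * pi \<le> norm (G y - G x)" .
  qed simp
qed

lemma not_nonpos_Reals_if_Re_nonneg:
  "0 \<le> Re w \<Longrightarrow> w \<noteq> 0 \<Longrightarrow> w \<notin> \<real>\<^sub>\<le>\<^sub>0"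
  by (auto simp: complex_nonpos_Reals_iff complex_eq_iff)

lemma convex_comb_1_notin_nonpos_Reals:
  assumes "0 \<le> Re z" "z \<noteq> 0" "0 \<le> t" "t \<le> 1"
  shows "complex_of_real (1 - t) + complex_of_real t * z \<notin> \<real>\<^sub>\<le>\<^sub>0"
  using assms
  by (intro not_nonpos_Reals_if_Re_nonneg) (auto simp: complex_eq_iff add_nonneg_eq_0_iff)

lemma Ln_quotient_of_products_by_continuation:
  fixes f :: "'i \<Rightarrow> real \<Rightarrow> complex" and g :: "'j \<Rightarrow> real \<Rightarrow> complex"
  assumes I: "finite I" and J: "finite J"
    and f: "\<And>i. i \<in> I \<Longrightarrow> continuous_on {0..1} (f i)" "\<And>i. i \<in> I \<Longrightarrow> f i 0 = 1"
      "\<And>i t. i \<in> I \<Longrightarrow> t \<in> {0..1} \<Longrightarrow> f i t \<notin> \<real>\<^sub>\<le>\<^sub>0"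
    and g: "\<And>j. j \<in> J \<Longrightarrow> continuous_on {0..1} (g j)" "\<And>j. j \<in> J \<Longrightarrow> g j 0 = 1"
      "\<And>j t. j \<in> J \<Longrightarrow> t \<in> {0..1} \<Longrightarrow> g j t \<notin> \<real>\<^sub>\<le>\<^sub>0"
    and quotient: "\<And>t. t \<in> {0..1} \<Longrightarrow>
      (\<Prod>i\<in>I. f i t ^ k i) / (\<Prod>j\<in>J. g j t ^ l j) \<notin> \<real>\<^sub>\<le>\<^sub>0"
  shows "(\<Sum>i\<in>I. of_nat (k i) * Ln (f i 1)) - (\<Sum>j\<in>J. of_nat (l j) * Ln (g j 1)) =
    Ln ((\<Prod>i\<in>I. f i 1 ^ k i) / (\<Prod>j\<in>J. g j 1 ^ l j))"
proof -
  define R where "R t = (\<Prod>i\<in>I. f i t ^ k i) / (\<Prod>j\<in>J. g j t ^ l j)" for t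
  define G where "G t = (\<Sum>i\<in>I. of_nat (k i) * Ln (f i t))
    - (\<Sum>j\<in>J. of_nat (l j) * Ln (g j t)) - Ln (R t)" for t
  have f0: "f i t \<noteq> 0" if "i \<in> I" "t \<in> {0..1}" for i t
    using f(3) that by fastforce
  have g0: "g j t \<noteq> 0" if "j \<in> J" "t \<in> {0..1}" for j t
    using g(3) that by fastforce
  have R0: "R t \<noteq> 0" if "t \<in> {0..1}" for t
    using quotient that unfolding R_def by fastforce
  have "exp (G t) = 1" if t: "t \<in> {0..1}" for t
  proof -
    have "exp (\<Sum>i\<in>I. of_nat (k i) * Ln (f i t)) = (\<Prod>i\<in>I. f i t ^ k i)"
      unfolding exp_sum[OF I] exp_of_nat_mult using f0 t by (intro prod.cong refl) simp
    moreover have "exp (\<Sum>j\<in>J. of_nat (l j) * Ln (g j t)) = (\<Prod>j\<in>J. g j t ^ l j)"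
      unfolding exp_sum[OF J] exp_of_nat_mult using g0 t by (intro prod.cong refl) simp
    moreover have "(\<Prod>j\<in>J. g j t ^ l j) \<noteq> 0"
      using g0 t J by (simp add: prod_zero_iff)
    ultimately show ?thesis
      using R0[OF t] by (simp add: G_def exp_diff R_def)
  qed
  moreover have "continuous_on {0..1} G"
    unfolding G_def R_def using f g quotient g0
    by (intro continuous_intros) (auto simp: prod_zero_iff J)
  ultimately have "G constant_on {0..1}"
    by (intro exp_eq_1_imp_constant_on) auto
  moreover have "G 0 = 0"
    by (simp add: G_def R_def f(2) g(2))
  ultimately have "G 1 = 0"
    by (metis atLeastAtMost_iff constant_on_def order_refl zero_le_one)
  then show ?thesis
    by (simp add: G_def R_def)
qed

section \<open>The matrix \<open>I\<^sub>n + iA\<close>\<close>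

lemma sym_mat_imp_sym_entries: "sym_mat n A \<Longrightarrow> sym_entries (Suc n) A"
  unfolding sym_mat_def sym_entries_def by (metis carrier_matD(1,2) index_transpose_mat(1))

lemma In_iA_eq_diag_plus_imag:
  "In_iA n A = diag_plus_imag (Suc n) (\<lambda>i. if i = 0 then 0 else 1) A"
  by (rule eq_matI) (auto simp: In_iA_def diag_plus_imag_def)

lemma eigenvalue_In_iA_Re_nonneg:
  assumes "sym_mat n A" "eigenvalue (In_iA n A) z"
  shows "0 \<le> Re z"
  using assms(2) unfolding In_iA_eq_diag_plus_imag
  by (rule eigenvalue_diag_plus_imag_Re_nonneg[OF sym_mat_imp_sym_entries[OF assms(1)], rotated]) auto

lemma eigenvalue_In_iA_0_imp_in_S:
  assumes sym: "sym_mat n A" and "eigenvalue (In_iA n A) 0"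
  shows "in_S n A"
proof -
  let ?M = "In_iA n A"
  obtain v where ev: "eigenvector ?M v 0"
    using assms(2) by (auto simp: eigenvalue_def)
  have M: "?M \<in> carrier_mat (Suc n) (Suc n)"
    by (simp add: In_iA_eq_diag_plus_imag)
  have v: "v \<in> carrier_vec (Suc n)" "v \<noteq> 0\<^sub>v (Suc n)" "?M *\<^sub>v v = 0\<^sub>v (Suc n)"
    using ev M by (auto simp: eigenvector_def)
  have vanish: "v $ i = 0" if "0 < i" "i < Suc n" for i
    using eigenvector_diag_plus_imag_vanishes[OF sym_mat_imp_sym_entries[OF sym] _
        ev[unfolded In_iA_eq_diag_plus_imag]] that
    by simp
  have "v $ 0 \<noteq> 0"
  proof
    assume "v $ 0 = 0"
    then have "v $ i = 0" if "i < Suc n" for i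
      using vanish that by (cases i) auto
    then have "v = 0\<^sub>v (Suc n)"
      using v(1) by (intro eq_vecI) auto
    with v(2) show False ..
  qed
  have "A $$ (i, 0) = 0" if i: "i < Suc n" for i
  proof -
    have "0 = (?M *\<^sub>v v) $ i"
      using v(3) i by simp
    also have "\<dots> = (\<Sum>j<Suc n. ?M $$ (i, j) * v $ j)"
      by (rule mult_mat_vec_index_sum[OF M v(1) i])
    also have "\<dots> = \<i> * complex_of_real (A $$ (i, 0)) * v $ 0"
      using vanish i by (subst sum.lessThan_Suc_shift) (auto simp: In_iA_def)
    finally show ?thesis
      using \<open>v $ 0 \<noteq> 0\<close> by simp
  qed
  then show ?thesis
    using sym_mat_imp_sym_entries[OF sym] by (auto simp: in_S_def sym_entries_def)
qed

text \<open>The two products are \<open>det ((1 - t)I + t(I\<^sub>n + iA))\<close> and \<open>det (I + itA\<^sup>+)\<close>, and the second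
  matrix is the \<open>(0,0)\<close> minor of the first.\<close>

lemma Re_eigenvalue_quotient_nonneg:
  assumes sym: "sym_mat n A" and t: "0 \<le> t" "t \<le> 1"
  shows "0 \<le> Re ((\<Prod>z\<in>{z. eigenvalue (In_iA n A) z}.
      (complex_of_real (1 - t) + complex_of_real t * z) ^ order z (char_poly (In_iA n A))) /
    (\<Prod>x\<in>{x. eigenvalue (plus_part n A) x}.
      (1 + \<i> * complex_of_real t * complex_of_real x) ^ order x (char_poly (plus_part n A))))"
    (is "0 \<le> Re (?P / ?Q)")
proof -
  let ?d = "\<lambda>i. if i = 0 then 1 - t else 1"
  let ?N = "complex_of_real (1 - t) \<cdot>\<^sub>m 1\<^sub>m (Suc n) + complex_of_real t \<cdot>\<^sub>m In_iA n A"
  let ?D = "1 \<cdot>\<^sub>m 1\<^sub>m n + (\<i> * complex_of_real t) \<cdot>\<^sub>m map_mat complex_of_real (plus_part n A)"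
  have symtA: "sym_entries (Suc n) (t \<cdot>\<^sub>m A)"
    using sym_mat_imp_sym_entries[OF sym] sym by (auto simp: sym_entries_def sym_mat_def)
  have symC: "sym_entries n (plus_part n A)"
    using sym_mat_imp_sym_entries[OF sym] by (simp add: sym_entries_def plus_part_def)
  have "?N = diag_plus_imag (Suc n) ?d (t \<cdot>\<^sub>m A)"
    using sym by (intro eq_matI) (auto simp: In_iA_def sym_mat_def algebra_simps)
  moreover have "mat_delete (diag_plus_imag (Suc n) ?d (t \<cdot>\<^sub>m A)) 0 0 = ?D"
    using sym by (intro eq_matI) (auto simp: mat_delete_def plus_part_def sym_mat_def)
  moreover have "\<And>i. i < Suc n \<Longrightarrow> 0 \<le> ?d i"
    using t by simp
  ultimately have "0 \<le> Re (det ?N * cnj (det ?D))"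
    using Re_det_mult_cnj_det_minor_nonneg[OF symtA] by metis
  moreover have "det ?N = ?P"
    by (rule det_add_smult_eq_prod_eigenvalues) (simp add: In_iA_eq_diag_plus_imag)
  moreover have "det ?D = ?Q"
    by (subst det_add_smult_real_sym_eq_prod_eigenvalues[OF _ symC])
      (simp_all add: plus_part_def mult.assoc)
  ultimately have PQ: "0 \<le> Re (?P * cnj ?Q)"
    by simp
  have Re_div: "Re (x / y) = Re (x * cnj y) / (cmod y)\<^sup>2" for x y
    by (simp add: Re_divide')
  show ?thesis
    unfolding Re_div by (rule divide_nonneg_nonneg[OF PQ zero_le_power2])
qed

lemma Theta_hat_eq_Im_sum_Ln:
  assumes "sym_mat n A" "\<not> in_S n A"
  shows "Theta_hat n A = Im (\<Sum>z\<in>{z. eigenvalue (In_iA n A) z}.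
    of_nat (order z (char_poly (In_iA n A))) * Ln z)"
proof -
  have "z \<noteq> 0" if "eigenvalue (In_iA n A) z" for z
    using that eigenvalue_In_iA_0_imp_in_S[OF assms(1)] assms(2) by auto
  then show ?thesis
    by (simp add: Theta_hat_def Im_sum Arg_eq_Im_Ln)
qed

lemma tr_arctan_eq_Im_sum_Ln:
  "tr_arctan B = Im (\<Sum>x\<in>{x. eigenvalue B x}.
    of_nat (order x (char_poly B)) * Ln (1 + \<i> * complex_of_real x))"
proof -
  have "arctan x = Im (Ln (1 + \<i> * complex_of_real x))" for x
    by (subst Arg_eq_Im_Ln[symmetric]) (auto simp: complex_eq_iff arg_conv_arctan)
  then show ?thesis
    by (simp add: tr_arctan_def Im_sum)
qed

lemma abs_Theta_hat_minus_tr_arctan_le: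
  assumes sym: "sym_mat n A" and nS: "\<not> in_S n A"
  shows "\<bar>Theta_hat n A - tr_arctan (plus_part n A)\<bar> \<le> pi / 2"
proof -
  let ?M = "In_iA n A" and ?C = "plus_part n A"
  define E where "E = {z. eigenvalue ?M z}"
  define k where "k z = order z (char_poly ?M)" for z
  define F where "F = {x. eigenvalue ?C x}"
  define l where "l x = order x (char_poly ?C)" for x
  define f where "f z t = complex_of_real (1 - t) + complex_of_real t * z" for z t
  define g where "g x t = 1 + \<i> * complex_of_real t * complex_of_real x" for x t
  define R where "R t = (\<Prod>z\<in>E. f z t ^ k z) / (\<Prod>x\<in>F. g x t ^ l x)" for t
  have M: "?M \<in> carrier_mat (Suc n) (Suc n)"
    by (simp add: In_iA_eq_diag_plus_imag)
  have C: "?C \<in> carrier_mat n n"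
    by (simp add: plus_part_def)
  have E: "0 \<le> Re z" "z \<noteq> 0" if "z \<in> E" for z
    using that eigenvalue_In_iA_Re_nonneg[OF sym] eigenvalue_In_iA_0_imp_in_S[OF sym] nS
    by (auto simp: E_def)
  have f_ok: "f z t \<notin> \<real>\<^sub>\<le>\<^sub>0" if "z \<in> E" "t \<in> {0..1}" for z t
    using convex_comb_1_notin_nonpos_Reals[OF E[OF that(1)]] that(2) by (simp add: f_def)
  have g_ok: "g x t \<notin> \<real>\<^sub>\<le>\<^sub>0" for x t
    by (simp add: g_def complex_nonpos_Reals_iff)
  have Re_R: "0 \<le> Re (R t)" if "t \<in> {0..1}" for t
    using Re_eigenvalue_quotient_nonneg[OF sym, of t] that
    by (simp add: R_def E_def F_def f_def g_def k_def l_def)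
  have R_ok: "R t \<notin> \<real>\<^sub>\<le>\<^sub>0" if t: "t \<in> {0..1}" for t
  proof (rule not_nonpos_Reals_if_Re_nonneg)
    show "0 \<le> Re (R t)"
      by (rule Re_R[OF t])
    have "f z t \<noteq> 0" if "z \<in> E" for z
      using f_ok[OF that t] by auto
    moreover have "g x t \<noteq> 0" for x
      using g_ok[of x t] by auto
    moreover have "finite E" "finite F"
      using finite_eigenvalues[OF M] finite_eigenvalues[OF C] by (simp_all add: E_def F_def)
    ultimately show "R t \<noteq> 0"
      by (simp add: R_def prod_zero_iff)
  qed
  have "(\<Sum>z\<in>E. of_nat (k z) * Ln (f z 1)) - (\<Sum>x\<in>F. of_nat (l x) * Ln (g x 1)) = Ln (R 1)"
    unfolding R_def using finite_eigenvalues[OF M] finite_eigenvalues[OF C] f_ok g_ok R_ok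
    by (intro Ln_quotient_of_products_by_continuation)
      (auto simp: E_def F_def f_def g_def R_def intro!: continuous_intros)
  then have "Im ((\<Sum>z\<in>E. of_nat (k z) * Ln z)
      - (\<Sum>x\<in>F. of_nat (l x) * Ln (1 + \<i> * complex_of_real x))) = Im (Ln (R 1))"
    by (simp add: f_def g_def)
  then have "Theta_hat n A - tr_arctan ?C = Im (Ln (R 1))"
    unfolding Theta_hat_eq_Im_sum_Ln[OF sym nS] tr_arctan_eq_Im_sum_Ln
    by (simp only: E_def F_def k_def l_def minus_complex.sel)
  also have "\<dots> = Arg (R 1)"
    by (rule Arg_eq_Im_Ln[symmetric]) (use R_ok[of 1] in auto)
  finally show ?thesis
    using Re_R[of 1] Arg_Re_nonneg[of "R 1"] by simp
qed

theorem lemma3p5: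
  fixes n :: nat and A :: "real mat"
  assumes "sym_mat n A"
  shows "\<bar>Theta_tilde n A - tr_arctan (plus_part n A)\<bar> \<le> pi/2 \<and>
         \<bar>Theta_tilde_low n A - tr_arctan (plus_part n A)\<bar> \<le> pi/2"
  using abs_Theta_hat_minus_tr_arctan_le[OF assms]
  by (cases "in_S n A") (simp_all add: Theta_tilde_def Theta_tilde_low_def)

end
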